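(* For every angle $\theta\in\mathbb{R}$, letting $\ket{R_\theta}=2^{-1/2}(\ket{0}+e^{i\theta}\ket{1})$, we have $\chi(R_\theta^{\otimes m}) = O(2^{m/2})$ as $m\to\infty$.
   Context: An $n$-qubit stabilizer state is a state of the form $C\ket{0^n}$ with $C$ an $n$-qubit Clifford unitary. The stabilizer rank $\chi(\psi)$ of an $n$-qubit state $\ket{\psi}$ is the minimum $k$ such that $\ket{\psi}=\sum_{i=1}^k c_i\ket{\Phi_i}$ with $c_i\in\mathbb{C}$ and $\ket{\Phi_i}$ stabilizer states. $R_\theta^{\otimes m}$ denotes the state $\ket{R_\theta}^{\otimes m}$. *)

theory Defs
  imports "Jordan_Normal_Form.Matrix" "HOL-Library.Landau_Symbols" Complex_Main
begin

text \<open>n-qubit states are complex vectors of dimension 2^n; basis state |x> for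
x < 2^n, where bit j of x is the value of qubit j.\<close>

definition adj :: "complex mat \<Rightarrow> complex mat" where
  "adj U = mat (dim_col U) (dim_row U) (\<lambda>(i,j). cnj (U $$ (j,i)))"

definition unitary_mat :: "nat \<Rightarrow> complex mat \<Rightarrow> bool" where
  "unitary_mat N U \<longleftrightarrow> U \<in> carrier_mat N N \<and> U * adj U = 1\<^sub>m N \<and> adj U * U = 1\<^sub>m N"

definition pauli_op :: "nat \<Rightarrow> nat \<Rightarrow> nat \<Rightarrow> complex mat" where
  "pauli_op n a b = mat (2^n) (2^n)
     (\<lambda>(y,x). if y = Bit_Operations.xor x a then (-1) ^ card {j. j < n \<and> bit b j \<and> bit x j} else 0)"

definition pauli_group :: "nat \<Rightarrow> complex mat set" where
  "pauli_group n = {(\<i> ^ k) \<cdot>\<^sub>m pauli_op n a b | k a b. a < 2^n \<and> b < 2^n}"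

definition clifford :: "nat \<Rightarrow> complex mat set" where
  "clifford n = {C. unitary_mat (2^n) C \<and>
       (\<forall>P \<in> pauli_group n. C * P * adj C \<in> pauli_group n)}"

definition stabilizer_states :: "nat \<Rightarrow> complex vec set" where
  "stabilizer_states n = {C *\<^sub>v unit_vec (2^n) 0 | C. C \<in> clifford n}"

definition stabilizer_rank :: "nat \<Rightarrow> complex vec \<Rightarrow> nat" where
  "stabilizer_rank n \<psi> = (LEAST k. \<exists>(c :: nat \<Rightarrow> complex) (\<Phi> :: nat \<Rightarrow> complex vec).
      (\<forall>i<k. \<Phi> i \<in> stabilizer_states n) \<and>
      \<psi> = vec (2^n) (\<lambda>x. \<Sum>i<k. c i * (\<Phi> i $ x)))"

definition kron_vec :: "complex vec \<Rightarrow> complex vec \<Rightarrow> complex vec" where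
  "kron_vec u v = vec (dim_vec u * dim_vec v) (\<lambda>i. u $ (i div dim_vec v) * v $ (i mod dim_vec v))"

definition R_state :: "real \<Rightarrow> complex vec" where
  "R_state \<theta> = vec 2 (\<lambda>i. if i = 0 then 1 / sqrt 2 else cis \<theta> / sqrt 2)"

fun tensor_pow :: "complex vec \<Rightarrow> nat \<Rightarrow> complex vec" where
  "tensor_pow v 0 = vec 1 (\<lambda>_. 1)"
| "tensor_pow v (Suc m) = kron_vec (tensor_pow v m) v"

end

theory Submission
  imports Defs
begin

text \<open>
  Write \<open>e = cis \<theta>\<close>. Three copies of \<open>|R\<^sub>\<theta>\<rangle>\<close> are a combination of two Clifford
  images of \<open>|R\<^sub>\<theta>\<rangle>|00\<rangle>\<close>:
  \<open>|R\<^sub>\<theta>\<rangle>\<^bsup>\<otimes>3\<^esup> = (1 - e\<^sup>2)/2 \<cdot> U\<^sub>1|R\<^sub>\<theta>00\<rangle> + e \<cdot> U\<^sub>2|R\<^sub>\<theta>00\<rangle>\<close>,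
  where, with \<open>F\<close> the fanout gate (two CNOTs with a common control),
  \<open>U\<^sub>1 = F (Z \<otimes> 1 \<otimes> 1)\<close> produces the cat state \<open>(|000\<rangle> - e|111\<rangle>)/\<surd>2\<close> and
  \<open>U\<^sub>2 = H\<^bsup>\<otimes>3\<^esup> F (ZH \<otimes> 1 \<otimes> 1)\<close> produces
  \<open>H\<^bsup>\<otimes>3\<^esup>((1 + e)|000\<rangle> + (e - 1)|111\<rangle>)/2\<close>, whose amplitudes are proportional to \<open>e\<close> on
  even-weight and to \<open>1\<close> on odd-weight basis states. Since Clifford unitaries and tensoring with
  stabilizer states preserve the number of terms of a stabilizer decomposition, this gives
  \<open>\<chi>(R\<^sub>\<theta>\<^bsup>\<otimes>(m+2)\<^esup>) \<le> 2 \<chi>(R\<^sub>\<theta>\<^bsup>\<otimes>m\<^esup>)\<close> for \<open>m \<ge> 1\<close>, and from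
  \<open>\<chi>(R\<^sub>\<theta>) \<le> 2\<close>, \<open>\<chi>(R\<^sub>\<theta>\<^bsup>\<otimes>2\<^esup>) \<le> 4\<close> the bound
  \<open>\<chi>(R\<^sub>\<theta>\<^bsup>\<otimes>m\<^esup>) \<le> 2\<^bsup>\<lfloor>m/2\<rfloor>+1\<^esup>\<close>.
\<close>

lemma sum_lessThan_add:
  fixes f :: "nat \<Rightarrow> 'a::comm_monoid_add"
  shows "(\<Sum>k<m + n. f k) = (\<Sum>k<m. f k) + (\<Sum>k<n. f (m + k))"
  by (induction n) (simp_all add: add.assoc)

lemma sum_lessThan_mult:
  fixes f :: "nat \<Rightarrow> 'a::comm_monoid_add"
  shows "(\<Sum>k<a * b. f k) = (\<Sum>i<a. \<Sum>j<b. f (i * b + j))"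
proof (induction a)
  case (Suc a)
  have "(\<Sum>k<Suc a * b. f k) = (\<Sum>k<a * b + b. f k)"
    by (simp add: add.commute)
  also have "\<dots> = (\<Sum>i<Suc a. \<Sum>j<b. f (i * b + j))"
    by (simp add: sum_lessThan_add Suc)
  finally show ?case .
qed simp

lemma div_mod_less_mult:
  fixes i :: nat
  assumes "i < a * b"
  shows "i div b < a" and "i mod b < b"
proof -
  show "i div b < a"
    using assms by (rule less_mult_imp_div_less)
  have "b \<noteq> 0"
    using assms by (cases "b = 0") auto
  then show "i mod b < b"
    by simp
qed

lemma mult_add_less_mult:
  fixes i j :: nat
  assumes "i < a" and "j < b"
  shows "i * b + j < a * b"
proof -
  have "Suc i * b \<le> a * b"
    using assms(1) by (intro mult_le_mono1) simp
  then show ?thesis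
    using assms(2) by simp
qed

lemma dim_kron_vec [simp]: "dim_vec (kron_vec u v) = dim_vec u * dim_vec v"
  by (simp add: kron_vec_def)

lemma index_kron_vec:
  "i < dim_vec u * dim_vec v \<Longrightarrow> kron_vec u v $ i = u $ (i div dim_vec v) * v $ (i mod dim_vec v)"
  by (simp add: kron_vec_def)

lemma kron_vec_assoc: "kron_vec (kron_vec u v) w = kron_vec u (kron_vec v w)"
proof (rule eq_vecI)
  fix i
  assume "i < dim_vec (kron_vec u (kron_vec v w))"
  then have i: "i < dim_vec u * (dim_vec v * dim_vec w)"
    by simp
  then have "dim_vec w \<noteq> 0"
    by auto
  then have "i mod (dim_vec v * dim_vec w) div dim_vec w = i div dim_vec w mod dim_vec v"
    by (simp add: mod_mult2_eq mult.commute[of "dim_vec v"])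
  moreover have "i div dim_vec w div dim_vec v = i div (dim_vec v * dim_vec w)"
    by (simp add: div_mult2_eq mult.commute[of "dim_vec v"])
  ultimately show "kron_vec (kron_vec u v) w $ i = kron_vec u (kron_vec v w) $ i"
    using i div_mod_less_mult[of i "dim_vec u * dim_vec v" "dim_vec w"]
      div_mod_less_mult[of i "dim_vec u" "dim_vec v * dim_vec w"]
    by (simp add: index_kron_vec mod_mod_cancel mult.assoc)
qed simp

lemma kron_vec_unit_vec:
  assumes "i < a" and "j < b"
  shows "kron_vec (unit_vec a i) (unit_vec b j) = unit_vec (a * b) (i * b + j)"
proof (rule eq_vecI)
  fix k
  assume "k < dim_vec (unit_vec (a * b) (i * b + j))"
  then have k: "k < a * b"
    by simp
  have iff: "k = i * b + j \<longleftrightarrow> k div b = i \<and> k mod b = j"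
    using assms(2) div_mult_mod_eq[of k b] by auto
  show "kron_vec (unit_vec a i) (unit_vec b j) $ k = unit_vec (a * b) (i * b + j) $ k"
    using k div_mod_less_mult[OF k] assms mult_add_less_mult[OF assms]
    by (simp add: index_kron_vec iff)
qed simp

lemma kron_vec_lincomb_right:
  assumes "dim_vec v = dim_vec w"
  shows "kron_vec u (a \<cdot>\<^sub>v v + b \<cdot>\<^sub>v w) = a \<cdot>\<^sub>v kron_vec u v + b \<cdot>\<^sub>v kron_vec u w"
  using assms div_mod_less_mult
  by (intro eq_vecI) (auto simp: index_kron_vec algebra_simps)

definition kron_mat :: "complex mat \<Rightarrow> complex mat \<Rightarrow> complex mat" where
  "kron_mat A B = mat (dim_row A * dim_row B) (dim_col A * dim_col B)
     (\<lambda>(i, j). A $$ (i div dim_row B, j div dim_col B) * B $$ (i mod dim_row B, j mod dim_col B))"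

lemma dim_kron_mat [simp]:
  "dim_row (kron_mat A B) = dim_row A * dim_row B"
  "dim_col (kron_mat A B) = dim_col A * dim_col B"
  by (simp_all add: kron_mat_def)

lemma kron_mat_carrier:
  "A \<in> carrier_mat a b \<Longrightarrow> B \<in> carrier_mat c d \<Longrightarrow> kron_mat A B \<in> carrier_mat (a * c) (b * d)"
  unfolding carrier_mat_def by auto

lemma index_kron_mat:
  "i < dim_row A * dim_row B \<Longrightarrow> j < dim_col A * dim_col B \<Longrightarrow>
   kron_mat A B $$ (i, j) = A $$ (i div dim_row B, j div dim_col B) * B $$ (i mod dim_row B, j mod dim_col B)"
  by (simp add: kron_mat_def)

lemma kron_row_sum:
  assumes A: "A \<in> carrier_mat n1 m1" and B: "B \<in> carrier_mat n2 m2"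
    and i: "i < n1 * n2"
  shows "(\<Sum>k<m1 * m2. kron_mat A B $$ (i, k) * (f (k div m2) * g (k mod m2))) =
    (\<Sum>k<m1. A $$ (i div n2, k) * f k) * (\<Sum>k<m2. B $$ (i mod n2, k) * g k)"
proof -
  have "(\<Sum>k<m1 * m2. kron_mat A B $$ (i, k) * (f (k div m2) * g (k mod m2))) =
      (\<Sum>k1<m1. \<Sum>k2<m2. (A $$ (i div n2, k1) * f k1) * (B $$ (i mod n2, k2) * g k2))"
    unfolding sum_lessThan_mult
  proof (intro sum.cong refl)
    fix k1 k2
    assume "k1 \<in> {..<m1}" and "k2 \<in> {..<m2}"
    then have "k1 * m2 + k2 < m1 * m2" and "k2 < m2"
      by (simp_all add: mult_add_less_mult)
    then show "kron_mat A B $$ (i, k1 * m2 + k2) * (f ((k1 * m2 + k2) div m2) * g ((k1 * m2 + k2) mod m2)) =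
        (A $$ (i div n2, k1) * f k1) * (B $$ (i mod n2, k2) * g k2)"
      using A B i by (simp add: index_kron_mat)
  qed
  then show ?thesis
    by (simp add: sum_product)
qed

lemma kron_mat_mult:
  assumes A: "A \<in> carrier_mat n1 m1" and B: "B \<in> carrier_mat n2 m2"
    and C: "C \<in> carrier_mat m1 l1" and D: "D \<in> carrier_mat m2 l2"
  shows "kron_mat A B * kron_mat C D = kron_mat (A * C) (B * D)"
proof (rule eq_matI)
  fix i j
  assume "i < dim_row (kron_mat (A * C) (B * D))" and "j < dim_col (kron_mat (A * C) (B * D))"
  then have i: "i < n1 * n2" and j: "j < l1 * l2"
    using A B C D by simp_all
  have "(kron_mat A B * kron_mat C D) $$ (i, j) =
      (\<Sum>k<m1 * m2. kron_mat A B $$ (i, k) * kron_mat C D $$ (k, j))"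
    using A B C D i j by (simp add: scalar_prod_def atLeast0LessThan)
  also have "\<dots> =
      (\<Sum>k<m1 * m2. kron_mat A B $$ (i, k) * (C $$ (k div m2, j div l2) * D $$ (k mod m2, j mod l2)))"
    using C D j by (intro sum.cong refl) (simp add: index_kron_mat)
  also have "\<dots> = (\<Sum>k<m1. A $$ (i div n2, k) * C $$ (k, j div l2)) *
      (\<Sum>k<m2. B $$ (i mod n2, k) * D $$ (k, j mod l2))"
    by (rule kron_row_sum[OF A B i])
  also have "\<dots> = kron_mat (A * C) (B * D) $$ (i, j)"
    using A B C D i j div_mod_less_mult[OF i] div_mod_less_mult[OF j]
    by (simp add: index_kron_mat scalar_prod_def atLeast0LessThan)
  finally show "(kron_mat A B * kron_mat C D) $$ (i, j) = kron_mat (A * C) (B * D) $$ (i, j)" .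
qed (use A B C D in simp_all)

lemma kron_mat_mult_vec:
  assumes A: "A \<in> carrier_mat n1 m1" and B: "B \<in> carrier_mat n2 m2"
    and u: "dim_vec u = m1" and v: "dim_vec v = m2"
  shows "kron_mat A B *\<^sub>v kron_vec u v = kron_vec (A *\<^sub>v u) (B *\<^sub>v v)"
proof (rule eq_vecI)
  fix i
  assume "i < dim_vec (kron_vec (A *\<^sub>v u) (B *\<^sub>v v))"
  then have i: "i < n1 * n2"
    using A B by simp
  have "(kron_mat A B *\<^sub>v kron_vec u v) $ i = (\<Sum>k<m1 * m2. kron_mat A B $$ (i, k) * kron_vec u v $ k)"
    using A B u v i by (simp add: scalar_prod_def atLeast0LessThan)
  also have "\<dots> = (\<Sum>k<m1 * m2. kron_mat A B $$ (i, k) * (u $ (k div m2) * v $ (k mod m2)))"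
    using u v by (intro sum.cong refl) (simp add: index_kron_vec)
  also have "\<dots> = (\<Sum>k<m1. A $$ (i div n2, k) * u $ k) * (\<Sum>k<m2. B $$ (i mod n2, k) * v $ k)"
    by (rule kron_row_sum[OF A B i])
  also have "\<dots> = kron_vec (A *\<^sub>v u) (B *\<^sub>v v) $ i"
    using A B u v i div_mod_less_mult[OF i]
    by (simp add: index_kron_vec scalar_prod_def atLeast0LessThan)
  finally show "(kron_mat A B *\<^sub>v kron_vec u v) $ i = kron_vec (A *\<^sub>v u) (B *\<^sub>v v) $ i" .
qed (use A B in simp)

lemma kron_mat_one: "kron_mat (1\<^sub>m a) (1\<^sub>m b) = 1\<^sub>m (a * b)"
proof (rule eq_matI)
  fix i j
  assume "i < dim_row (1\<^sub>m (a * b))" and "j < dim_col (1\<^sub>m (a * b))"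
  then have i: "i < a * b" and j: "j < a * b"
    by simp_all
  have "i = j \<longleftrightarrow> i div b = j div b \<and> i mod b = j mod b"
    by (metis div_mult_mod_eq)
  then show "kron_mat (1\<^sub>m a) (1\<^sub>m b) $$ (i, j) = 1\<^sub>m (a * b) $$ (i, j)"
    using i j div_mod_less_mult[OF i] div_mod_less_mult[OF j] by (auto simp: index_kron_mat)
qed simp_all

lemma kron_mat_smult: "kron_mat (x \<cdot>\<^sub>m A) (y \<cdot>\<^sub>m B) = (x * y) \<cdot>\<^sub>m kron_mat A B"
proof (rule eq_matI)
  fix i j
  assume "i < dim_row ((x * y) \<cdot>\<^sub>m kron_mat A B)" and "j < dim_col ((x * y) \<cdot>\<^sub>m kron_mat A B)"
  then have i: "i < dim_row A * dim_row B" and j: "j < dim_col A * dim_col B"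
    by simp_all
  show "kron_mat (x \<cdot>\<^sub>m A) (y \<cdot>\<^sub>m B) $$ (i, j) = ((x * y) \<cdot>\<^sub>m kron_mat A B) $$ (i, j)"
    using i j div_mod_less_mult[OF i] div_mod_less_mult[OF j] by (simp add: index_kron_mat)
qed simp_all

lemma dim_adj [simp]: "dim_row (adj A) = dim_col A" "dim_col (adj A) = dim_row A"
  by (simp_all add: adj_def)

lemma adj_carrier: "A \<in> carrier_mat n m \<Longrightarrow> adj A \<in> carrier_mat m n"
  unfolding carrier_mat_def by simp

lemma index_adj: "i < dim_col A \<Longrightarrow> j < dim_row A \<Longrightarrow> adj A $$ (i, j) = cnj (A $$ (j, i))"
  by (simp add: adj_def)

lemma adj_mult:
  assumes "A \<in> carrier_mat n m" and "B \<in> carrier_mat m l"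
  shows "adj (A * B) = adj B * adj A"
proof (rule eq_matI)
  fix i j
  assume "i < dim_row (adj B * adj A)" and "j < dim_col (adj B * adj A)"
  then show "adj (A * B) $$ (i, j) = (adj B * adj A) $$ (i, j)"
    using assms by (simp add: index_adj scalar_prod_def mult.commute)
qed (use assms in simp_all)

lemma adj_one [simp]: "adj (1\<^sub>m n) = 1\<^sub>m n"
  by (rule eq_matI) (auto simp: index_adj)

lemma adj_kron_mat: "adj (kron_mat A B) = kron_mat (adj A) (adj B)"
proof (rule eq_matI)
  fix i j
  assume "i < dim_row (kron_mat (adj A) (adj B))" and "j < dim_col (kron_mat (adj A) (adj B))"
  then have i: "i < dim_col A * dim_col B" and j: "j < dim_row A * dim_row B"
    by simp_all
  show "adj (kron_mat A B) $$ (i, j) = kron_mat (adj A) (adj B) $$ (i, j)"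
    using i j div_mod_less_mult[OF i] div_mod_less_mult[OF j] by (simp add: index_adj index_kron_mat)
qed simp_all

lemma unitary_mat_one: "unitary_mat n (1\<^sub>m n)"
  by (simp add: unitary_mat_def)

lemma unitary_mat_mult:
  assumes U: "unitary_mat n U" and V: "unitary_mat n V"
  shows "unitary_mat n (U * V)"
proof -
  have carrier: "U \<in> carrier_mat n n" "V \<in> carrier_mat n n" "adj U \<in> carrier_mat n n"
    "adj V \<in> carrier_mat n n"
    using U V by (auto simp: unitary_mat_def)
  then have "U * V * adj (U * V) = U * (V * adj V) * adj U"
    and "adj (U * V) * (U * V) = adj V * (adj U * U) * V"
    by (simp_all add: adj_mult assoc_mult_mat[of _ n n _ n _ n])
  then show ?thesis
    using U V carrier by (simp add: unitary_mat_def)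
qed

lemma unitary_mat_kron:
  assumes U: "unitary_mat n U" and V: "unitary_mat m V"
  shows "unitary_mat (n * m) (kron_mat U V)"
proof -
  have carrier: "U \<in> carrier_mat n n" "V \<in> carrier_mat m m" "adj U \<in> carrier_mat n n"
    "adj V \<in> carrier_mat m m"
    using U V by (auto simp: unitary_mat_def)
  then have "kron_mat U V * adj (kron_mat U V) = kron_mat (U * adj U) (V * adj V)"
    and "adj (kron_mat U V) * kron_mat U V = kron_mat (adj U * U) (adj V * V)"
    by (simp_all add: adj_kron_mat kron_mat_mult)
  then show ?thesis
    using U V carrier kron_mat_carrier[OF carrier(1,2)] by (simp add: unitary_mat_def kron_mat_one)
qed

lemma card_Collect_less_add:
  fixes n k :: nat
  shows "card {j. j < n + k \<and> P j} = card {j. j < k \<and> P j} + card {j. j < n \<and> P (j + k)}"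
proof -
  have "{j. j < n + k \<and> P j} = {j. j < k \<and> P j} \<union> (\<lambda>j. j + k) ` {j. j < n \<and> P (j + k)}"
  proof -
    have "x \<in> (\<lambda>j. j + k) ` {j. j < n \<and> P (j + k)}" if "x < n + k" "P x" "\<not> x < k" for x
      using that by (intro image_eqI[of _ _ "x - k"]) auto
    then show ?thesis
      by auto
  qed
  moreover have "{j. j < k \<and> P j} \<inter> (\<lambda>j. j + k) ` {j. j < n \<and> P (j + k)} = {}"
    by auto
  moreover have "card ((\<lambda>j. j + k) ` {j. j < n \<and> P (j + k)}) = card {j. j < n \<and> P (j + k)}"
    by (rule card_image) (simp add: inj_on_def)
  ultimately show ?thesis
    by (simp add: card_Un_disjoint)
qed

lemma card_Collect_less_eq_sum:
  fixes n :: nat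
  shows "card {j. j < n \<and> P j} = (\<Sum>j<n. if P j then 1 else 0)"
proof (induction n)
  case (Suc n)
  have "{j. j < Suc n \<and> P j} = {j. j < n \<and> P j} \<union> (if P n then {n} else {})"
    by (auto simp: less_Suc_eq)
  then show ?case
    using Suc by (simp add: card_Un_disjoint)
qed simp

lemma dim_pauli_op [simp]: "dim_row (pauli_op n a b) = 2 ^ n" "dim_col (pauli_op n a b) = 2 ^ n"
  by (simp_all add: pauli_op_def)

lemma pauli_op_carrier: "pauli_op n a b \<in> carrier_mat (2 ^ n) (2 ^ n)"
  unfolding carrier_mat_def by simp

lemma index_pauli_op:
  "y < 2 ^ n \<Longrightarrow> x < 2 ^ n \<Longrightarrow> pauli_op n a b $$ (y, x) =
    (if y = Bit_Operations.xor x a then (-1) ^ (\<Sum>j<n. if bit b j \<and> bit x j then 1 else 0) else 0)"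
  by (simp add: pauli_op_def card_Collect_less_eq_sum)

lemma pauli_op_add:
  "pauli_op (n + k) a b =
    kron_mat (pauli_op n (a div 2 ^ k) (b div 2 ^ k)) (pauli_op k (a mod 2 ^ k) (b mod 2 ^ k))"
  (is "_ = kron_mat ?P ?Q")
proof (rule eq_matI)
  fix y x
  assume "y < dim_row (kron_mat ?P ?Q)" and "x < dim_col (kron_mat ?P ?Q)"
  then have y: "y < 2 ^ n * 2 ^ k" and x: "x < 2 ^ n * 2 ^ k"
    by simp_all
  have "y = Bit_Operations.xor x a \<longleftrightarrow>
      y div 2 ^ k = Bit_Operations.xor (x div 2 ^ k) (a div 2 ^ k) \<and>
      y mod 2 ^ k = Bit_Operations.xor (x mod 2 ^ k) (a mod 2 ^ k)"
    by (metis div_mult_mod_eq drop_bit_eq_div drop_bit_xor take_bit_eq_mod take_bit_xor)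
  moreover have "card {j. j < n + k \<and> bit b j \<and> bit x j} =
      card {j. j < k \<and> bit (b mod 2 ^ k) j \<and> bit (x mod 2 ^ k) j} +
      card {j. j < n \<and> bit (b div 2 ^ k) j \<and> bit (x div 2 ^ k) j}"
    using card_Collect_less_add[of n k "\<lambda>j. bit b j \<and> bit x j"]
    by (simp add: flip: take_bit_eq_mod drop_bit_eq_div add: bit_take_bit_iff bit_drop_bit_eq
        conj_commute add.commute cong: conj_cong)
  ultimately show "pauli_op (n + k) a b $$ (y, x) = kron_mat ?P ?Q $$ (y, x)"
    using y x div_mod_less_mult[OF y] div_mod_less_mult[OF x]
    by (simp add: index_kron_mat pauli_op_def power_add)
qed (simp_all add: power_add)

lemma kron_pauli_op:
  assumes "a' < 2 ^ k" and "b' < 2 ^ k"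
  shows "kron_mat (pauli_op n a b) (pauli_op k a' b') = pauli_op (n + k) (a * 2 ^ k + a') (b * 2 ^ k + b')"
  using assms by (simp add: pauli_op_add)

lemma pauli_groupI: "a < 2 ^ n \<Longrightarrow> b < 2 ^ n \<Longrightarrow> \<i> ^ k \<cdot>\<^sub>m pauli_op n a b \<in> pauli_group n"
  unfolding pauli_group_def by blast

lemma pauli_groupE:
  assumes "P \<in> pauli_group n"
  obtains k a b where "P = \<i> ^ k \<cdot>\<^sub>m pauli_op n a b" and "a < 2 ^ n" and "b < 2 ^ n"
  using assms unfolding pauli_group_def by blast

lemma pauli_op_in_pauli_group: "a < 2 ^ n \<Longrightarrow> b < 2 ^ n \<Longrightarrow> pauli_op n a b \<in> pauli_group n"
proof -
  have "1 \<cdot>\<^sub>m pauli_op n a b = pauli_op n a b"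
    by (rule eq_matI) auto
  then show "a < 2 ^ n \<Longrightarrow> b < 2 ^ n \<Longrightarrow> pauli_op n a b \<in> pauli_group n"
    using pauli_groupI[of a n b 0] by simp
qed

lemma clifford_unitary: "C \<in> clifford n \<Longrightarrow> unitary_mat (2 ^ n) C"
  by (simp add: clifford_def)

lemma clifford_carrier: "C \<in> clifford n \<Longrightarrow> C \<in> carrier_mat (2 ^ n) (2 ^ n)"
  by (simp add: clifford_def unitary_mat_def)

lemma clifford_conj_pauli_op:
  "C \<in> clifford n \<Longrightarrow> a < 2 ^ n \<Longrightarrow> b < 2 ^ n \<Longrightarrow> C * pauli_op n a b * adj C \<in> pauli_group n"
  by (simp add: clifford_def pauli_op_in_pauli_group)

text \<open>Conjugation is linear, so it suffices to check the Pauli operators without phase.\<close>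
lemma cliffordI:
  assumes U: "unitary_mat (2 ^ n) U"
    and conj: "\<And>a b. a < 2 ^ n \<Longrightarrow> b < 2 ^ n \<Longrightarrow> U * pauli_op n a b * adj U \<in> pauli_group n"
  shows "U \<in> clifford n"
proof -
  have "U * P * adj U \<in> pauli_group n" if "P \<in> pauli_group n" for P
  proof -
    obtain k a b where P: "P = \<i> ^ k \<cdot>\<^sub>m pauli_op n a b" and a: "a < 2 ^ n" and b: "b < 2 ^ n"
      using \<open>P \<in> pauli_group n\<close> by (rule pauli_groupE)
    obtain k' a' b' where conj_ab: "U * pauli_op n a b * adj U = \<i> ^ k' \<cdot>\<^sub>m pauli_op n a' b'"
      and "a' < 2 ^ n" and "b' < 2 ^ n"
      using conj[OF a b] by (rule pauli_groupE)
    have carrier: "U \<in> carrier_mat (2 ^ n) (2 ^ n)" "adj U \<in> carrier_mat (2 ^ n) (2 ^ n)"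
      using U adj_carrier by (auto simp: unitary_mat_def)
    then have "U * P * adj U = \<i> ^ k \<cdot>\<^sub>m (U * pauli_op n a b * adj U)"
      unfolding P using pauli_op_carrier[of n a b]
      by (simp add: mult_smult_distrib mult_smult_assoc_mat[of _ "2 ^ n" "2 ^ n"])
    also have "\<dots> = \<i> ^ (k + k') \<cdot>\<^sub>m pauli_op n a' b'"
      unfolding conj_ab by (auto simp: power_add intro!: eq_matI)
    finally show ?thesis
      using \<open>a' < 2 ^ n\<close> \<open>b' < 2 ^ n\<close> by (simp add: pauli_groupI)
  qed
  then show ?thesis
    using U by (simp add: clifford_def)
qed

lemma clifford_one: "1\<^sub>m (2 ^ n) \<in> clifford n"
  by (rule cliffordI) (auto simp: unitary_mat_one pauli_op_in_pauli_group pauli_op_carrier)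

lemma clifford_mult:
  assumes C: "C \<in> clifford n" and D: "D \<in> clifford n"
  shows "C * D \<in> clifford n"
proof (rule cliffordI)
  show "unitary_mat (2 ^ n) (C * D)"
    using C D by (simp add: clifford_unitary unitary_mat_mult)
  fix a b :: nat
  assume "a < 2 ^ n" and "b < 2 ^ n"
  with D have "D * pauli_op n a b * adj D \<in> pauli_group n"
    by (rule clifford_conj_pauli_op)
  then have "C * (D * pauli_op n a b * adj D) * adj C \<in> pauli_group n"
    using C by (simp add: clifford_def)
  moreover have "C * D * pauli_op n a b * adj (C * D) = C * (D * pauli_op n a b * adj D) * adj C"
    using clifford_carrier[OF C] clifford_carrier[OF D] adj_carrier[OF clifford_carrier[OF C]]
      adj_carrier[OF clifford_carrier[OF D]] pauli_op_carrier[of n a b]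
    by (simp add: adj_mult assoc_mult_mat[of _ "2 ^ n" "2 ^ n" _ "2 ^ n" _ "2 ^ n"])
  ultimately show "C * D * pauli_op n a b * adj (C * D) \<in> pauli_group n"
    by simp
qed

lemma clifford_kron:
  assumes C: "C \<in> clifford n" and D: "D \<in> clifford k"
  shows "kron_mat C D \<in> clifford (n + k)"
proof (rule cliffordI)
  show "unitary_mat (2 ^ (n + k)) (kron_mat C D)"
    using unitary_mat_kron[OF clifford_unitary[OF C] clifford_unitary[OF D]] by (simp add: power_add)
  fix a b :: nat
  assume "a < 2 ^ (n + k)" and "b < 2 ^ (n + k)"
  then have "a div 2 ^ k < 2 ^ n" and "b div 2 ^ k < 2 ^ n"
    by (simp_all add: less_mult_imp_div_less power_add)
  then obtain j1 a1 b1 where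
    conj1: "C * pauli_op n (a div 2 ^ k) (b div 2 ^ k) * adj C = \<i> ^ j1 \<cdot>\<^sub>m pauli_op n a1 b1"
    and a1: "a1 < 2 ^ n" and b1: "b1 < 2 ^ n"
    using clifford_conj_pauli_op[OF C] by (metis pauli_groupE)
  obtain j2 a2 b2 where
    conj2: "D * pauli_op k (a mod 2 ^ k) (b mod 2 ^ k) * adj D = \<i> ^ j2 \<cdot>\<^sub>m pauli_op k a2 b2"
    and a2: "a2 < 2 ^ k" and b2: "b2 < 2 ^ k"
    using clifford_conj_pauli_op[OF D] by (metis pauli_groupE mod_less_divisor zero_less_numeral
        zero_less_power)
  have carrier: "C \<in> carrier_mat (2 ^ n) (2 ^ n)" "D \<in> carrier_mat (2 ^ k) (2 ^ k)"
    "adj C \<in> carrier_mat (2 ^ n) (2 ^ n)" "adj D \<in> carrier_mat (2 ^ k) (2 ^ k)"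
    using C D adj_carrier clifford_carrier by blast+
  let ?P = "pauli_op n (a div 2 ^ k) (b div 2 ^ k)" and ?Q = "pauli_op k (a mod 2 ^ k) (b mod 2 ^ k)"
  have "kron_mat C D * pauli_op (n + k) a b = kron_mat (C * ?P) (D * ?Q)"
    unfolding pauli_op_add by (rule kron_mat_mult) (use carrier pauli_op_carrier in auto)
  then have "kron_mat C D * pauli_op (n + k) a b * adj (kron_mat C D) =
      kron_mat (C * ?P) (D * ?Q) * kron_mat (adj C) (adj D)"
    by (simp add: adj_kron_mat)
  also have "\<dots> = kron_mat (C * ?P * adj C) (D * ?Q * adj D)"
    by (rule kron_mat_mult) (use carrier pauli_op_carrier in \<open>auto intro!: mult_carrier_mat\<close>)
  also have "\<dots> = \<i> ^ (j1 + j2) \<cdot>\<^sub>m pauli_op (n + k) (a1 * 2 ^ k + a2) (b1 * 2 ^ k + b2)"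
    unfolding conj1 conj2 kron_mat_smult kron_pauli_op[OF a2 b2] by (simp add: power_add)
  finally have "kron_mat C D * pauli_op (n + k) a b * adj (kron_mat C D) =
      \<i> ^ (j1 + j2) \<cdot>\<^sub>m pauli_op (n + k) (a1 * 2 ^ k + a2) (b1 * 2 ^ k + b2)" .
  moreover have "a1 * 2 ^ k + a2 < 2 ^ (n + k)" and "b1 * 2 ^ k + b2 < 2 ^ (n + k)"
    using mult_add_less_mult[OF a1 a2] mult_add_less_mult[OF b1 b2] by (simp_all add: power_add)
  ultimately show "kron_mat C D * pauli_op (n + k) a b * adj (kron_mat C D) \<in> pauli_group (n + k)"
    by (simp only: pauli_groupI)
qed

lemma stabilizer_statesI: "C \<in> clifford n \<Longrightarrow> C *\<^sub>v unit_vec (2 ^ n) 0 \<in> stabilizer_states n"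
  unfolding stabilizer_states_def by blast

lemma stabilizer_state_dim: "s \<in> stabilizer_states n \<Longrightarrow> dim_vec s = 2 ^ n"
  unfolding stabilizer_states_def using clifford_carrier by fastforce

lemma unit_vec_stabilizer_state: "unit_vec (2 ^ n) 0 \<in> stabilizer_states n"
  using stabilizer_statesI[OF clifford_one[of n]] by simp

lemma clifford_mult_stabilizer_state:
  assumes G: "G \<in> clifford n" and s: "s \<in> stabilizer_states n"
  shows "G *\<^sub>v s \<in> stabilizer_states n"
proof -
  obtain C where C: "C \<in> clifford n" and s_eq: "s = C *\<^sub>v unit_vec (2 ^ n) 0"
    using s unfolding stabilizer_states_def by blast
  have "G *\<^sub>v s = (G * C) *\<^sub>v unit_vec (2 ^ n) 0"
    unfolding s_eq using clifford_carrier[OF G] clifford_carrier[OF C] by simp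
  then show ?thesis
    using stabilizer_statesI[OF clifford_mult[OF G C]] by simp
qed

lemma kron_vec_stabilizer_state:
  assumes s: "s \<in> stabilizer_states n" and t: "t \<in> stabilizer_states k"
  shows "kron_vec s t \<in> stabilizer_states (n + k)"
proof -
  obtain C where C: "C \<in> clifford n" and s_eq: "s = C *\<^sub>v unit_vec (2 ^ n) 0"
    using s unfolding stabilizer_states_def by blast
  obtain D where D: "D \<in> clifford k" and t_eq: "t = D *\<^sub>v unit_vec (2 ^ k) 0"
    using t unfolding stabilizer_states_def by blast
  have "kron_vec s t = kron_mat C D *\<^sub>v kron_vec (unit_vec (2 ^ n) 0) (unit_vec (2 ^ k) 0)"
    unfolding s_eq t_eq using kron_mat_mult_vec[OF clifford_carrier[OF C] clifford_carrier[OF D]]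
    by simp
  also have "\<dots> = kron_mat C D *\<^sub>v unit_vec (2 ^ (n + k)) 0"
    by (simp add: kron_vec_unit_vec power_add)
  finally show ?thesis
    using stabilizer_statesI[OF clifford_kron[OF C D]] by simp
qed

definition stabilizer_decomp :: "nat \<Rightarrow> nat \<Rightarrow> complex vec \<Rightarrow> bool" where
  "stabilizer_decomp n k \<psi> \<longleftrightarrow> (\<exists>(c :: nat \<Rightarrow> complex) (\<Phi> :: nat \<Rightarrow> complex vec).
      (\<forall>i<k. \<Phi> i \<in> stabilizer_states n) \<and> \<psi> = vec (2 ^ n) (\<lambda>x. \<Sum>i<k. c i * (\<Phi> i $ x)))"

lemma stabilizer_rank_le: "stabilizer_decomp n k \<psi> \<Longrightarrow> stabilizer_rank n \<psi> \<le> k"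
  unfolding stabilizer_rank_def stabilizer_decomp_def by (rule Least_le)

lemma stabilizer_decompI:
  assumes "\<And>i. i < k \<Longrightarrow> \<Phi> i \<in> stabilizer_states n" and "dim_vec \<psi> = 2 ^ n"
    and "\<And>x. x < 2 ^ n \<Longrightarrow> \<psi> $ x = (\<Sum>i<k. c i * (\<Phi> i $ x))"
  shows "stabilizer_decomp n k \<psi>"
  unfolding stabilizer_decomp_def using assms by (auto intro!: exI[of _ c] exI[of _ \<Phi>] eq_vecI)

lemma stabilizer_decompE:
  assumes "stabilizer_decomp n k \<psi>"
  obtains \<Phi> c where "\<And>i. i < k \<Longrightarrow> \<Phi> i \<in> stabilizer_states n" and "dim_vec \<psi> = 2 ^ n"
    and "\<And>x. x < 2 ^ n \<Longrightarrow> \<psi> $ x = (\<Sum>i<k. c i * (\<Phi> i $ x))"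
proof -
  obtain c \<Phi> where "\<forall>i<k. \<Phi> i \<in> stabilizer_states n"
    and "\<psi> = vec (2 ^ n) (\<lambda>x. \<Sum>i<k. c i * (\<Phi> i $ x))"
    using assms unfolding stabilizer_decomp_def by blast
  then show ?thesis
    by (intro that[where c = c and \<Phi> = \<Phi>]) auto
qed

lemma stabilizer_decomp_stabilizer_state: "s \<in> stabilizer_states n \<Longrightarrow> stabilizer_decomp n 1 s"
  by (rule stabilizer_decompI[where c = "\<lambda>_. 1" and \<Phi> = "\<lambda>_. s"]) (simp_all add: stabilizer_state_dim)

lemma stabilizer_decomp_lincomb:
  assumes u: "stabilizer_decomp n k u" and v: "stabilizer_decomp n l v"
  shows "stabilizer_decomp n (k + l) (a \<cdot>\<^sub>v u + b \<cdot>\<^sub>v v)"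
proof -
  obtain \<Phi> c where \<Phi>: "\<And>i. i < k \<Longrightarrow> \<Phi> i \<in> stabilizer_states n" and u_dim: "dim_vec u = 2 ^ n"
    and u_eq: "\<And>x. x < 2 ^ n \<Longrightarrow> u $ x = (\<Sum>i<k. c i * (\<Phi> i $ x))"
    using stabilizer_decompE[OF u] by blast
  obtain \<Psi> d where \<Psi>: "\<And>i. i < l \<Longrightarrow> \<Psi> i \<in> stabilizer_states n" and v_dim: "dim_vec v = 2 ^ n"
    and v_eq: "\<And>x. x < 2 ^ n \<Longrightarrow> v $ x = (\<Sum>i<l. d i * (\<Psi> i $ x))"
    using stabilizer_decompE[OF v] by blast
  show ?thesis
  proof (rule stabilizer_decompI[where c = "\<lambda>i. if i < k then a * c i else b * d (i - k)"
        and \<Phi> = "\<lambda>i. if i < k then \<Phi> i else \<Psi> (i - k)"])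
    fix x :: nat
    assume x: "x < 2 ^ n"
    show "(a \<cdot>\<^sub>v u + b \<cdot>\<^sub>v v) $ x = (\<Sum>i<k + l. (if i < k then a * c i else b * d (i - k)) *
        ((if i < k then \<Phi> i else \<Psi> (i - k)) $ x))"
      using x u_dim v_dim
      by (simp add: sum_lessThan_add u_eq v_eq sum_distrib_left mult.assoc)
  qed (use \<Phi> \<Psi> u_dim v_dim in auto)
qed

lemma stabilizer_decomp_clifford:
  assumes G: "G \<in> clifford n" and u: "stabilizer_decomp n k u"
  shows "stabilizer_decomp n k (G *\<^sub>v u)"
proof -
  obtain \<Phi> c where \<Phi>: "\<And>i. i < k \<Longrightarrow> \<Phi> i \<in> stabilizer_states n" and u_dim: "dim_vec u = 2 ^ n"
    and u_eq: "\<And>x. x < 2 ^ n \<Longrightarrow> u $ x = (\<Sum>i<k. c i * (\<Phi> i $ x))"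
    using stabilizer_decompE[OF u] by blast
  have G_carrier: "G \<in> carrier_mat (2 ^ n) (2 ^ n)"
    using G by (rule clifford_carrier)
  show ?thesis
  proof (rule stabilizer_decompI[where c = c and \<Phi> = "\<lambda>i. G *\<^sub>v \<Phi> i"])
    fix y :: nat
    assume y: "y < 2 ^ n"
    have "(G *\<^sub>v u) $ y = (\<Sum>x<2 ^ n. G $$ (y, x) * (\<Sum>i<k. c i * (\<Phi> i $ x)))"
      using G_carrier y u_dim u_eq by (simp add: scalar_prod_def atLeast0LessThan)
    also have "\<dots> = (\<Sum>i<k. c i * (\<Sum>x<2 ^ n. G $$ (y, x) * (\<Phi> i $ x)))"
      by (simp add: sum_distrib_left sum_distrib_right mult_ac sum.swap[of _ "{..<k}"])
    also have "\<dots> = (\<Sum>i<k. c i * ((G *\<^sub>v \<Phi> i) $ y))"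
      using G_carrier y stabilizer_state_dim[OF \<Phi>]
      by (intro sum.cong refl) (simp add: scalar_prod_def atLeast0LessThan)
    finally show "(G *\<^sub>v u) $ y = (\<Sum>i<k. c i * ((G *\<^sub>v \<Phi> i) $ y))" .
  qed (use G G_carrier \<Phi> clifford_mult_stabilizer_state in auto)
qed

lemma stabilizer_decomp_kron:
  assumes u: "stabilizer_decomp n k u" and v: "stabilizer_decomp m l v"
  shows "stabilizer_decomp (n + m) (k * l) (kron_vec u v)"
proof -
  obtain \<Phi> c where \<Phi>: "\<And>i. i < k \<Longrightarrow> \<Phi> i \<in> stabilizer_states n" and u_dim: "dim_vec u = 2 ^ n"
    and u_eq: "\<And>x. x < 2 ^ n \<Longrightarrow> u $ x = (\<Sum>i<k. c i * (\<Phi> i $ x))"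
    using stabilizer_decompE[OF u] by blast
  obtain \<Psi> d where \<Psi>: "\<And>i. i < l \<Longrightarrow> \<Psi> i \<in> stabilizer_states m" and v_dim: "dim_vec v = 2 ^ m"
    and v_eq: "\<And>x. x < 2 ^ m \<Longrightarrow> v $ x = (\<Sum>i<l. d i * (\<Psi> i $ x))"
    using stabilizer_decompE[OF v] by blast
  show ?thesis
  proof (rule stabilizer_decompI[where c = "\<lambda>t. c (t div l) * d (t mod l)"
        and \<Phi> = "\<lambda>t. kron_vec (\<Phi> (t div l)) (\<Psi> (t mod l))"])
    fix t :: nat
    assume "t < k * l"
    then show "kron_vec (\<Phi> (t div l)) (\<Psi> (t mod l)) \<in> stabilizer_states (n + m)"
      using \<Phi> \<Psi> div_mod_less_mult by (simp add: kron_vec_stabilizer_state)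
  next
    fix x :: nat
    assume "x < 2 ^ (n + m)"
    then have x: "x < 2 ^ n * 2 ^ m"
      by (simp add: power_add)
    have "kron_vec u v $ x =
        (\<Sum>i<k. c i * (\<Phi> i $ (x div 2 ^ m))) * (\<Sum>j<l. d j * (\<Psi> j $ (x mod 2 ^ m)))"
      using x div_mod_less_mult[OF x] u_dim v_dim by (simp add: index_kron_vec u_eq v_eq)
    also have "\<dots> = (\<Sum>i<k. \<Sum>j<l. c i * d j * (kron_vec (\<Phi> i) (\<Psi> j) $ x))"
      using x stabilizer_state_dim[OF \<Phi>] stabilizer_state_dim[OF \<Psi>]
      by (auto simp: sum_product index_kron_vec mult_ac intro!: sum.cong)
    also have "\<dots> = (\<Sum>t<k * l. c (t div l) * d (t mod l) * (kron_vec (\<Phi> (t div l)) (\<Psi> (t mod l)) $ x))"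
      by (simp add: sum_lessThan_mult)
    finally show "kron_vec u v $ x = (\<Sum>t<k * l. c (t div l) * d (t mod l) *
        (kron_vec (\<Phi> (t div l)) (\<Psi> (t mod l)) $ x))" .
  qed (simp add: u_dim v_dim power_add)
qed

lemma mat2_eqI:
  assumes "f (0, 0) = g (0, 0)" "f (0, 1) = g (0, 1)" "f (1, 0) = g (1, 0)" "f (1, 1) = g (1, 1)"
  shows "mat 2 2 f = mat 2 2 g"
  by (rule cong_mat) (use assms in \<open>auto dest!: less_2_cases\<close>)

lemma mat2_mult: "mat 2 2 f * mat 2 2 g = mat 2 2 (\<lambda>(i, j). f (i, 0) * g (0, j) + f (i, 1) * g (1, j))"
  by (rule eq_matI) (auto simp: scalar_prod_def eval_nat_numeral)

lemma mat2_mult_vec: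
  "dim_vec v = 2 \<Longrightarrow> mat 2 2 f *\<^sub>v v = vec 2 (\<lambda>i. f (i, 0) * v $ 0 + f (i, 1) * v $ 1)"
  by (rule eq_vecI) (auto simp: scalar_prod_def eval_nat_numeral)

lemma adj_mat2: "adj (mat 2 2 f) = mat 2 2 (\<lambda>(i, j). cnj (f (j, i)))"
  by (rule eq_matI) (auto simp: adj_def)

lemma uminus_mat2: "- mat 2 2 f = mat 2 2 (\<lambda>ij. - f ij)"
  by (rule eq_matI) auto

lemma one_mat2: "1\<^sub>m 2 = mat 2 2 (\<lambda>(i, j). if i = j then 1 else 0)"
  by (rule eq_matI) auto

definition inv_sqrt2 :: complex where
  "inv_sqrt2 = 1 / complex_of_real (sqrt 2)"

lemma inv_sqrt2_mult_self: "inv_sqrt2 * inv_sqrt2 = 1 / 2"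
proof -
  have "complex_of_real (sqrt 2) * complex_of_real (sqrt 2) = 2"
    by (simp flip: of_real_mult)
  then show ?thesis
    by (simp add: inv_sqrt2_def field_simps)
qed

lemma inv_sqrt2_mult_self': "inv_sqrt2 * (inv_sqrt2 * z) = z / 2"
  using inv_sqrt2_mult_self by (metis mult.assoc mult.commute times_divide_eq_right mult_1)

lemma cnj_inv_sqrt2 [simp]: "cnj inv_sqrt2 = inv_sqrt2"
  by (simp add: inv_sqrt2_def)

definition pauli_X :: "complex mat" where
  "pauli_X = mat 2 2 (\<lambda>(i, j). if i = j then 0 else 1)"

definition pauli_Z :: "complex mat" where
  "pauli_Z = mat 2 2 (\<lambda>(i, j). if i \<noteq> j then 0 else if i = 0 then 1 else -1)"

definition pauli_XZ :: "complex mat" where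
  "pauli_XZ = mat 2 2 (\<lambda>(i, j). if i = j then 0 else if j = 0 then 1 else -1)"

definition hadamard :: "complex mat" where
  "hadamard = mat 2 2 (\<lambda>(i, j). if i = 1 \<and> j = 1 then - inv_sqrt2 else inv_sqrt2)"

lemmas mat2_simps = pauli_X_def pauli_Z_def pauli_XZ_def hadamard_def mat2_mult adj_mat2 uminus_mat2
  one_mat2 inv_sqrt2_mult_self inv_sqrt2_mult_self'

lemma pauli_op_1:
  "pauli_op 1 0 0 = 1\<^sub>m 2" "pauli_op 1 1 0 = pauli_X" "pauli_op 1 0 1 = pauli_Z" "pauli_op 1 1 1 = pauli_XZ"
  unfolding pauli_X_def pauli_Z_def pauli_XZ_def
  by (rule eq_matI; auto simp: index_pauli_op bit_0 dest!: less_2_cases)+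

lemma pauli_group_1:
  "1\<^sub>m 2 \<in> pauli_group 1" "pauli_X \<in> pauli_group 1" "pauli_Z \<in> pauli_group 1"
  "pauli_XZ \<in> pauli_group 1" "- pauli_X \<in> pauli_group 1" "- pauli_Z \<in> pauli_group 1"
  "- pauli_XZ \<in> pauli_group 1"
proof -
  have neg: "- A = \<i> ^ 2 \<cdot>\<^sub>m A" for A :: "complex mat"
    by (rule eq_matI) auto
  show "1\<^sub>m 2 \<in> pauli_group 1" "pauli_X \<in> pauli_group 1" "pauli_Z \<in> pauli_group 1"
    "pauli_XZ \<in> pauli_group 1"
    using pauli_op_in_pauli_group[of _ 1] by (simp_all flip: pauli_op_1)
  show "- pauli_X \<in> pauli_group 1" "- pauli_Z \<in> pauli_group 1" "- pauli_XZ \<in> pauli_group 1"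
    using pauli_groupI[of _ 1 _ 2] by (simp_all add: neg flip: pauli_op_1)
qed

lemma clifford_1I:
  assumes U: "U \<in> carrier_mat 2 2" and unitary: "U * adj U = 1\<^sub>m 2" "adj U * U = 1\<^sub>m 2"
    and conj: "U * pauli_X * adj U \<in> pauli_group 1" "U * pauli_Z * adj U \<in> pauli_group 1"
      "U * pauli_XZ * adj U \<in> pauli_group 1"
  shows "U \<in> clifford 1"
proof (rule cliffordI)
  show "unitary_mat (2 ^ 1) U"
    using U unitary by (simp add: unitary_mat_def)
  fix a b :: nat
  assume "a < 2 ^ 1" and "b < 2 ^ 1"
  then have "pauli_op 1 a b \<in> {1\<^sub>m 2, pauli_X, pauli_Z, pauli_XZ}"
    using pauli_op_1 by (auto dest!: less_2_cases)
  moreover have "U * 1\<^sub>m 2 * adj U \<in> pauli_group 1"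
    using U unitary pauli_group_1 by simp
  ultimately show "U * pauli_op 1 a b * adj U \<in> pauli_group 1"
    using conj by auto
qed

lemma pauli_X_clifford: "pauli_X \<in> clifford 1"
proof (rule clifford_1I)
  show "pauli_X \<in> carrier_mat 2 2"
    by (simp add: pauli_X_def)
  show "pauli_X * adj pauli_X = 1\<^sub>m 2" "adj pauli_X * pauli_X = 1\<^sub>m 2"
    by (simp add: mat2_simps, rule mat2_eqI, simp_all)+
  have "pauli_X * pauli_X * adj pauli_X = pauli_X" "pauli_X * pauli_Z * adj pauli_X = - pauli_Z"
    "pauli_X * pauli_XZ * adj pauli_X = - pauli_XZ"
    by (simp add: mat2_simps, rule mat2_eqI, simp_all)+
  then show "pauli_X * pauli_X * adj pauli_X \<in> pauli_group 1"
    "pauli_X * pauli_Z * adj pauli_X \<in> pauli_group 1" "pauli_X * pauli_XZ * adj pauli_X \<in> pauli_group 1"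
    by (simp_all only: pauli_group_1)
qed

lemma pauli_Z_clifford: "pauli_Z \<in> clifford 1"
proof (rule clifford_1I)
  show "pauli_Z \<in> carrier_mat 2 2"
    by (simp add: pauli_Z_def)
  show "pauli_Z * adj pauli_Z = 1\<^sub>m 2" "adj pauli_Z * pauli_Z = 1\<^sub>m 2"
    by (simp add: mat2_simps, rule mat2_eqI, simp_all)+
  have "pauli_Z * pauli_X * adj pauli_Z = - pauli_X" "pauli_Z * pauli_Z * adj pauli_Z = pauli_Z"
    "pauli_Z * pauli_XZ * adj pauli_Z = - pauli_XZ"
    by (simp add: mat2_simps, rule mat2_eqI, simp_all)+
  then show "pauli_Z * pauli_X * adj pauli_Z \<in> pauli_group 1"
    "pauli_Z * pauli_Z * adj pauli_Z \<in> pauli_group 1" "pauli_Z * pauli_XZ * adj pauli_Z \<in> pauli_group 1"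
    by (simp_all only: pauli_group_1)
qed

lemma hadamard_clifford: "hadamard \<in> clifford 1"
proof (rule clifford_1I)
  show "hadamard \<in> carrier_mat 2 2"
    by (simp add: hadamard_def)
  show "hadamard * adj hadamard = 1\<^sub>m 2" "adj hadamard * hadamard = 1\<^sub>m 2"
    by (simp add: mat2_simps; rule mat2_eqI; simp add: mat2_simps)+
  have "hadamard * pauli_X * adj hadamard = pauli_Z" "hadamard * pauli_Z * adj hadamard = pauli_X"
    "hadamard * pauli_XZ * adj hadamard = - pauli_XZ"
    by (simp add: mat2_simps; rule mat2_eqI; simp add: mat2_simps)+
  then show "hadamard * pauli_X * adj hadamard \<in> pauli_group 1"
    "hadamard * pauli_Z * adj hadamard \<in> pauli_group 1" "hadamard * pauli_XZ * adj hadamard \<in> pauli_group 1"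
    by (simp_all only: pauli_group_1)
qed

definition perm_mat :: "nat \<Rightarrow> (nat \<Rightarrow> nat) \<Rightarrow> complex mat" where
  "perm_mat N f = mat N N (\<lambda>(y, x). if y = f x then 1 else 0)"

lemma dim_perm_mat [simp]: "dim_row (perm_mat N f) = N" "dim_col (perm_mat N f) = N"
  by (simp_all add: perm_mat_def)

locale involution_on =
  fixes N :: nat and f :: "nat \<Rightarrow> nat"
  assumes closed: "x < N \<Longrightarrow> f x < N" and involutive: "x < N \<Longrightarrow> f (f x) = x"
begin

lemma eq_iff: "y < N \<Longrightarrow> x < N \<Longrightarrow> y = f x \<longleftrightarrow> x = f y"
  using involutive by metis

lemma inj_iff: "x < N \<Longrightarrow> y < N \<Longrightarrow> f x = f y \<longleftrightarrow> x = y"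
  using involutive by metis

lemma perm_mat_mult_vec:
  assumes w: "dim_vec w = N" and y: "y < N"
  shows "(perm_mat N f *\<^sub>v w) $ y = w $ f y"
proof -
  have "(perm_mat N f *\<^sub>v w) $ y = (\<Sum>x<N. (if x = f y then 1 else 0) * w $ x)"
    using w y by (auto simp: perm_mat_def scalar_prod_def atLeast0LessThan eq_iff intro!: sum.cong)
  also have "\<dots> = w $ f y"
    using closed[OF y] by (simp add: if_distrib[of "\<lambda>t. t * _"] cong: if_cong)
  finally show ?thesis .
qed

lemma adj_perm_mat: "adj (perm_mat N f) = perm_mat N f"
  by (rule eq_matI) (auto simp: perm_mat_def index_adj eq_iff)

lemma perm_mat_conj:
  assumes M: "M \<in> carrier_mat N N"
  shows "perm_mat N f * M * adj (perm_mat N f) = mat N N (\<lambda>(y, z). M $$ (f y, f z))"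
proof -
  have PM: "perm_mat N f * M = mat N N (\<lambda>(y, x). M $$ (f y, x))"
  proof (rule eq_matI)
    fix y x
    assume "y < dim_row (mat N N (\<lambda>(y, x). M $$ (f y, x)))" and "x < dim_col (mat N N (\<lambda>(y, x). M $$ (f y, x)))"
    then have y: "y < N" and x: "x < N"
      by simp_all
    have "(perm_mat N f * M) $$ (y, x) = (\<Sum>k<N. (if k = f y then 1 else 0) * M $$ (k, x))"
      using M y x by (auto simp: perm_mat_def scalar_prod_def atLeast0LessThan eq_iff intro!: sum.cong)
    then show "(perm_mat N f * M) $$ (y, x) = mat N N (\<lambda>(y, x). M $$ (f y, x)) $$ (y, x)"
      using closed[OF y] y x by (simp add: if_distrib[of "\<lambda>t. t * _"] cong: if_cong)
  qed (use M in auto)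
  show ?thesis
  proof (rule eq_matI)
    fix y z
    assume "y < dim_row (mat N N (\<lambda>(y, z). M $$ (f y, f z)))"
      and "z < dim_col (mat N N (\<lambda>(y, z). M $$ (f y, f z)))"
    then have y: "y < N" and z: "z < N"
      by simp_all
    have "(perm_mat N f * M * adj (perm_mat N f)) $$ (y, z) =
        (\<Sum>x<N. M $$ (f y, x) * (if x = f z then 1 else 0))"
      unfolding adj_perm_mat PM using y z
      by (auto simp: perm_mat_def scalar_prod_def atLeast0LessThan eq_iff intro!: sum.cong)
    then show "(perm_mat N f * M * adj (perm_mat N f)) $$ (y, z) = mat N N (\<lambda>(y, z). M $$ (f y, f z)) $$ (y, z)"
      using closed[OF z] y z by (simp add: if_distrib[of "\<lambda>t. _ * t"] cong: if_cong)
  qed (use M in auto)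
qed

lemma unitary_perm_mat: "unitary_mat N (perm_mat N f)"
proof -
  have "perm_mat N f * 1\<^sub>m N * adj (perm_mat N f) = 1\<^sub>m N"
    unfolding perm_mat_conj[OF one_carrier_mat]
    by (rule eq_matI) (auto simp: closed inj_iff)
  moreover have "perm_mat N f \<in> carrier_mat N N"
    by (simp add: perm_mat_def)
  ultimately show ?thesis
    by (simp add: unitary_mat_def adj_perm_mat)
qed

end

lemma sum_lessThan_3: "(\<Sum>j<3. f j) = f 0 + f 1 + f (2::nat)"
  by (simp add: eval_nat_numeral)

lemma all_less_8: "(\<forall>x<(8::nat). P x) \<longleftrightarrow> P 0 \<and> P 1 \<and> P 2 \<and> P 3 \<and> P 4 \<and> P 5 \<and> P 6 \<and> P 7"
proof -
  have "{..<(8::nat)} = {0, 1, 2, 3, 4, 5, 6, 7}"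
    by auto
  then show ?thesis
    by (metis (no_types, lifting) insert_iff lessThan_iff empty_iff)
qed

text \<open>With the first tensor factor as the most significant bit, \<open>fanout\<close> flips the two lower
  qubits exactly when the top one is set: the product of two CNOTs with a common control.\<close>
definition fanout :: "nat \<Rightarrow> nat" where
  "fanout x = (if x < 4 then x else Bit_Operations.xor x 3)"

definition fanout_gate :: "complex mat" where
  "fanout_gate = perm_mat 8 fanout"

interpretation fanout: involution_on 8 fanout
proof -
  have "\<forall>x<8. fanout x < 8 \<and> fanout (fanout x) = x"
    by (simp add: all_less_8 fanout_def)
  then show "involution_on 8 fanout"
    by unfold_locales auto
qed

lemma fanout_clifford: "fanout_gate \<in> clifford 3"
proof (rule cliffordI)
  show "unitary_mat (2 ^ 3) fanout_gate"
    using fanout.unitary_perm_mat by (simp add: fanout_gate_def)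
  fix a b :: nat
  assume a: "a < 2 ^ 3" and b: "b < 2 ^ 3"
  txt \<open>Conjugation maps \<open>X\<^sup>a\<close> to \<open>X\<^bsup>fanout a\<^esup>\<close> and \<open>Z\<^sup>b\<close> to \<open>Z\<^bsup>g b\<^esup>\<close>, where \<open>g\<close>
    flips the top bit of \<open>b\<close> when its two lower bits have odd parity.\<close>
  define g where "g b = (if b mod 4 = 1 \<or> b mod 4 = 2 then Bit_Operations.xor b 4 else b)" for b :: nat
  have fanout_xor: "\<forall>z<8. \<forall>a<8. Bit_Operations.xor (fanout z) a = fanout (Bit_Operations.xor z (fanout a))
      \<and> Bit_Operations.xor z (fanout a) < 8"
    by (simp add: all_less_8 fanout_def)
  have sign: "\<forall>b<8. \<forall>z<8. (-1::complex) ^ (\<Sum>j<3. if bit b j \<and> bit (fanout z) j then 1 else 0) =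
      (-1) ^ (\<Sum>j<3. if bit (g b) j \<and> bit z j then 1 else 0)"
    by (simp add: all_less_8 fanout_def g_def sum_lessThan_3 bit_0)
  have "fanout_gate * pauli_op 3 a b * adj fanout_gate = pauli_op 3 (fanout a) (g b)"
  proof (rule eq_matI)
    fix y z
    assume "y < dim_row (pauli_op 3 (fanout a) (g b))" and "z < dim_col (pauli_op 3 (fanout a) (g b))"
    then have y: "y < 8" and z: "z < 8"
      by simp_all
    have xor: "Bit_Operations.xor (fanout z) a = fanout (Bit_Operations.xor z (fanout a))"
      and xor_less: "Bit_Operations.xor z (fanout a) < 8"
      using fanout_xor z a by simp_all
    have "(-1::complex) ^ (\<Sum>j<3. if bit b j \<and> bit (fanout z) j then 1 else 0) =
        (-1) ^ (\<Sum>j<3. if bit (g b) j \<and> bit z j then 1 else 0)"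
      using sign z b by simp
    moreover have "fanout y = Bit_Operations.xor (fanout z) a \<longleftrightarrow> y = Bit_Operations.xor z (fanout a)"
      unfolding xor using y xor_less fanout.eq_iff fanout.closed fanout.involutive by metis
    ultimately show "(fanout_gate * pauli_op 3 a b * adj fanout_gate) $$ (y, z) = pauli_op 3 (fanout a) (g b) $$ (y, z)"
      using y z fanout.closed pauli_op_carrier[of 3 a b]
      by (simp add: fanout_gate_def fanout.perm_mat_conj index_pauli_op)
  qed (simp_all add: fanout_gate_def)
  moreover have "fanout a < 2 ^ 3" and "g b < 2 ^ 3"
  proof -
    have "\<forall>b<8. g b < 8"
      by (simp add: all_less_8 g_def)
    then show "fanout a < 2 ^ 3" and "g b < 2 ^ 3"
      using a b fanout.closed by simp_all
  qed
  ultimately show "fanout_gate * pauli_op 3 a b * adj fanout_gate \<in> pauli_group 3"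
    by (simp add: pauli_op_in_pauli_group)
qed

definition cat_state :: "complex \<Rightarrow> complex \<Rightarrow> complex vec" where
  "cat_state \<alpha> \<beta> = vec 8 (\<lambda>y. if y = 0 then \<alpha> else if y = 7 then \<beta> else 0)"

definition hadamard_3 :: "complex mat" where
  "hadamard_3 = kron_mat hadamard (kron_mat hadamard hadamard)"

definition cat_clifford :: "complex mat" where
  "cat_clifford = fanout_gate * kron_mat pauli_Z (1\<^sub>m 4)"

definition hadamard_cat_clifford :: "complex mat" where
  "hadamard_cat_clifford = hadamard_3 * fanout_gate * kron_mat (pauli_Z * hadamard) (1\<^sub>m 4)"

lemma fanout_gate_carrier: "fanout_gate \<in> carrier_mat 8 8"
  by (simp add: fanout_gate_def perm_mat_def)

lemma hadamard_3_carrier: "hadamard_3 \<in> carrier_mat 8 8"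
  unfolding carrier_mat_def by (simp add: hadamard_3_def hadamard_def)

lemma kron_mat_one_4_clifford: "U \<in> clifford 1 \<Longrightarrow> kron_mat U (1\<^sub>m 4) \<in> clifford 3"
  using clifford_kron[OF _ clifford_one, of U 1 2] by (simp add: numeral_3_eq_3)

lemma hadamard_3_clifford: "hadamard_3 \<in> clifford 3"
  using clifford_kron[OF hadamard_clifford clifford_kron[OF hadamard_clifford hadamard_clifford]]
  by (simp add: hadamard_3_def numeral_3_eq_3)

lemma cat_clifford_clifford: "cat_clifford \<in> clifford 3"
  unfolding cat_clifford_def
  by (intro clifford_mult fanout_clifford kron_mat_one_4_clifford pauli_Z_clifford)

lemma hadamard_cat_clifford_clifford: "hadamard_cat_clifford \<in> clifford 3"
  unfolding hadamard_cat_clifford_def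
  by (intro clifford_mult hadamard_3_clifford fanout_clifford kron_mat_one_4_clifford
      pauli_Z_clifford hadamard_clifford)

lemma R_state_eq: "R_state \<theta> = vec 2 (\<lambda>i. if i = 0 then inv_sqrt2 else inv_sqrt2 * cis \<theta>)"
  by (rule eq_vecI) (auto simp: R_state_def inv_sqrt2_def)

lemma dim_R_state [simp]: "dim_vec (R_state \<theta>) = 2"
  by (simp add: R_state_def)

lemma kron_mat_one_mult_kron_vec:
  assumes "A \<in> carrier_mat n n" and "dim_vec w = n" and "dim_vec v = m"
  shows "kron_mat A (1\<^sub>m m) *\<^sub>v kron_vec w v = kron_vec (A *\<^sub>v w) v"
  using kron_mat_mult_vec[OF assms(1) one_carrier_mat assms(2,3)] carrier_vecI[OF assms(3)] by simp

lemma fanout_gate_mult_kron_vec: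
  assumes "dim_vec w = 2"
  shows "fanout_gate *\<^sub>v kron_vec w (unit_vec 4 0) = cat_state (w $ 0) (w $ 1)"
proof (rule eq_vecI)
  fix y
  assume "y < dim_vec (cat_state (w $ 0) (w $ 1))"
  then have y: "y < 8"
    by (simp add: cat_state_def)
  have "\<forall>y<8. kron_vec w (unit_vec 4 0) $ fanout y = cat_state (w $ 0) (w $ 1) $ y"
    using assms by (simp add: all_less_8 fanout_def index_kron_vec cat_state_def)
  moreover have "(fanout_gate *\<^sub>v kron_vec w (unit_vec 4 0)) $ y = kron_vec w (unit_vec 4 0) $ fanout y"
    unfolding fanout_gate_def using y assms by (intro fanout.perm_mat_mult_vec) simp_all
  ultimately show "(fanout_gate *\<^sub>v kron_vec w (unit_vec 4 0)) $ y = cat_state (w $ 0) (w $ 1) $ y"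
    using y by simp
qed (simp add: fanout_gate_def cat_state_def)

lemma hadamard_3_mult_cat_state:
  "hadamard_3 *\<^sub>v cat_state \<alpha> \<beta> =
    vec 8 (\<lambda>y. inv_sqrt2 / 2 * (if y \<in> {0, 3, 5, 6} then \<alpha> + \<beta> else \<alpha> - \<beta>))"
proof (rule eq_vecI)
  fix y
  assume "y < dim_vec (vec 8 (\<lambda>y. inv_sqrt2 / 2 * (if y \<in> {0, 3, 5, 6} then \<alpha> + \<beta> else \<alpha> - \<beta>)))"
  then have y: "y < 8"
    by simp
  have H: "hadamard \<in> carrier_mat 2 2"
    by (simp add: hadamard_def)
  have "(hadamard_3 *\<^sub>v cat_state \<alpha> \<beta>) $ y = (\<Sum>x<8. hadamard_3 $$ (y, x) *
      ((if x = 0 then \<alpha> else 0) + (if x = 7 then \<beta> else 0)))"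
    using y H by (auto simp: hadamard_3_def cat_state_def scalar_prod_def atLeast0LessThan intro!: sum.cong)
  also have "\<dots> = hadamard_3 $$ (y, 0) * \<alpha> + hadamard_3 $$ (y, 7) * \<beta>"
    by (simp add: distrib_left sum.distrib if_distrib[of "\<lambda>t. _ * t"] cong: if_cong)
  also have "\<dots> = inv_sqrt2 / 2 * (if y \<in> {0, 3, 5, 6} then \<alpha> + \<beta> else \<alpha> - \<beta>)"
  proof -
    have "\<forall>y<8. hadamard_3 $$ (y, 0) * \<alpha> + hadamard_3 $$ (y, 7) * \<beta> =
        inv_sqrt2 / 2 * (if y \<in> {0, 3, 5, 6} then \<alpha> + \<beta> else \<alpha> - \<beta>)"
      using H by (simp add: all_less_8 hadamard_3_def index_kron_mat hadamard_def
          inv_sqrt2_mult_self inv_sqrt2_mult_self' field_simps)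
    then show ?thesis
      using y by simp
  qed
  finally show "(hadamard_3 *\<^sub>v cat_state \<alpha> \<beta>) $ y =
      vec 8 (\<lambda>y. inv_sqrt2 / 2 * (if y \<in> {0, 3, 5, 6} then \<alpha> + \<beta> else \<alpha> - \<beta>)) $ y"
    using y by simp
qed (simp add: hadamard_3_def hadamard_def)

lemma pauli_Z_mult_R_state:
  "pauli_Z *\<^sub>v R_state \<theta> = vec 2 (\<lambda>i. if i = 0 then inv_sqrt2 else - inv_sqrt2 * cis \<theta>)"
  by (rule eq_vecI) (auto simp: pauli_Z_def mat2_mult_vec R_state_eq dest!: less_2_cases)

lemma pauli_Z_hadamard_mult_R_state:
  "(pauli_Z * hadamard) *\<^sub>v R_state \<theta> = vec 2 (\<lambda>i. if i = 0 then (1 + cis \<theta>) / 2 else (cis \<theta> - 1) / 2)"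
  by (rule eq_vecI)
    (auto simp: pauli_Z_def hadamard_def mat2_mult mat2_mult_vec R_state_eq inv_sqrt2_mult_self
      inv_sqrt2_mult_self' algebra_simps dest!: less_2_cases)

lemma cat_clifford_mult_R_state:
  "cat_clifford *\<^sub>v kron_vec (R_state \<theta>) (unit_vec 4 0) = cat_state inv_sqrt2 (- inv_sqrt2 * cis \<theta>)"
proof -
  have Z: "pauli_Z \<in> carrier_mat 2 2"
    by (simp add: pauli_Z_def)
  have "cat_clifford *\<^sub>v kron_vec (R_state \<theta>) (unit_vec 4 0) =
      fanout_gate *\<^sub>v (kron_mat pauli_Z (1\<^sub>m 4) *\<^sub>v kron_vec (R_state \<theta>) (unit_vec 4 0))"
  proof -
    have "kron_mat pauli_Z (1\<^sub>m 4) \<in> carrier_mat 8 8"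
      using kron_mat_carrier[OF Z one_carrier_mat[of 4]] by simp
    moreover have "kron_vec (R_state \<theta>) (unit_vec 4 0) \<in> carrier_vec 8"
      by (intro carrier_vecI) simp
    ultimately show ?thesis
      unfolding cat_clifford_def using fanout_gate_carrier
      by (simp add: assoc_mult_mat_vec[of _ 8 8 _ 8])
  qed
  also have "\<dots> = fanout_gate *\<^sub>v kron_vec (pauli_Z *\<^sub>v R_state \<theta>) (unit_vec 4 0)"
    using Z by (simp add: kron_mat_one_mult_kron_vec)
  also have "\<dots> = cat_state inv_sqrt2 (- inv_sqrt2 * cis \<theta>)"
    by (simp add: fanout_gate_mult_kron_vec pauli_Z_mult_R_state)
  finally show ?thesis .
qed

lemma hadamard_cat_clifford_mult_R_state:
  "hadamard_cat_clifford *\<^sub>v kron_vec (R_state \<theta>) (unit_vec 4 0) =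
    hadamard_3 *\<^sub>v cat_state ((1 + cis \<theta>) / 2) ((cis \<theta> - 1) / 2)"
proof -
  have ZH: "pauli_Z * hadamard \<in> carrier_mat 2 2"
    by (intro mult_carrier_mat[of _ 2 2 _ 2]) (simp_all add: pauli_Z_def hadamard_def)
  have "hadamard_cat_clifford *\<^sub>v kron_vec (R_state \<theta>) (unit_vec 4 0) =
      hadamard_3 *\<^sub>v (fanout_gate *\<^sub>v (kron_mat (pauli_Z * hadamard) (1\<^sub>m 4) *\<^sub>v
        kron_vec (R_state \<theta>) (unit_vec 4 0)))"
  proof -
    have "kron_mat (pauli_Z * hadamard) (1\<^sub>m 4) \<in> carrier_mat 8 8"
      using kron_mat_carrier[OF ZH one_carrier_mat[of 4]] by simp
    moreover have "kron_vec (R_state \<theta>) (unit_vec 4 0) \<in> carrier_vec 8"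
      by (intro carrier_vecI) simp
    ultimately show ?thesis
      unfolding hadamard_cat_clifford_def using hadamard_3_carrier fanout_gate_carrier
      by (simp add: assoc_mult_mat_vec[of _ 8 8 _ 8])
  qed
  also have "\<dots> = hadamard_3 *\<^sub>v (fanout_gate *\<^sub>v kron_vec ((pauli_Z * hadamard) *\<^sub>v R_state \<theta>) (unit_vec 4 0))"
    using ZH by (simp add: kron_mat_one_mult_kron_vec)
  also have "\<dots> = hadamard_3 *\<^sub>v cat_state ((1 + cis \<theta>) / 2) ((cis \<theta> - 1) / 2)"
    by (simp add: fanout_gate_mult_kron_vec pauli_Z_hadamard_mult_R_state)
  finally show ?thesis .
qed

lemma R_state_cube:
  "kron_vec (R_state \<theta>) (kron_vec (R_state \<theta>) (R_state \<theta>)) =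
    ((1 - cis \<theta> ^ 2) / 2) \<cdot>\<^sub>v (cat_clifford *\<^sub>v kron_vec (R_state \<theta>) (unit_vec 4 0)) +
    cis \<theta> \<cdot>\<^sub>v (hadamard_cat_clifford *\<^sub>v kron_vec (R_state \<theta>) (unit_vec 4 0))"
proof -
  have "\<forall>y<8. kron_vec (R_state \<theta>) (kron_vec (R_state \<theta>) (R_state \<theta>)) $ y =
      (1 - cis \<theta> ^ 2) / 2 * cat_state inv_sqrt2 (- inv_sqrt2 * cis \<theta>) $ y +
      cis \<theta> * (inv_sqrt2 / 2 * (if y \<in> {0, 3, 5, 6} then (1 + cis \<theta>) / 2 + (cis \<theta> - 1) / 2
        else (1 + cis \<theta>) / 2 - (cis \<theta> - 1) / 2))"
    by (simp add: all_less_8 index_kron_vec R_state_eq cat_state_def inv_sqrt2_mult_self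
        inv_sqrt2_mult_self' power2_eq_square field_simps)
  then show ?thesis
    unfolding cat_clifford_mult_R_state hadamard_cat_clifford_mult_R_state hadamard_3_mult_cat_state
    by (intro eq_vecI) (simp_all add: cat_state_def)
qed

lemma dim_tensor_pow [simp]: "dim_vec (tensor_pow v m) = dim_vec v ^ m"
  by (induction m) simp_all

lemma tensor_pow_0: "tensor_pow v 0 = unit_vec (2 ^ 0) 0"
  by (rule eq_vecI) auto

lemma stabilizer_decomp_R_state: "stabilizer_decomp 1 2 (R_state \<theta>)"
proof -
  have "pauli_X *\<^sub>v unit_vec (2 ^ 1) 0 = unit_vec 2 1"
    by (rule eq_vecI) (auto simp: pauli_X_def mat2_mult_vec dest!: less_2_cases)
  then have "unit_vec 2 1 \<in> stabilizer_states 1"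
    using clifford_mult_stabilizer_state[OF pauli_X_clifford unit_vec_stabilizer_state] by simp
  then have "stabilizer_decomp 1 (1 + 1) (inv_sqrt2 \<cdot>\<^sub>v unit_vec (2 ^ 1) 0 + (inv_sqrt2 * cis \<theta>) \<cdot>\<^sub>v unit_vec 2 1)"
    by (intro stabilizer_decomp_lincomb stabilizer_decomp_stabilizer_state unit_vec_stabilizer_state)
  moreover have "inv_sqrt2 \<cdot>\<^sub>v unit_vec (2 ^ 1) 0 + (inv_sqrt2 * cis \<theta>) \<cdot>\<^sub>v unit_vec 2 1 = R_state \<theta>"
    by (rule eq_vecI) (auto simp: R_state_eq dest!: less_2_cases)
  ultimately show ?thesis
    by (simp add: numeral_2_eq_2)
qed

lemma stabilizer_decomp_kron_R_state_cube:
  assumes u: "dim_vec u = 2 ^ n" and decomp: "stabilizer_decomp (n + 1) k (kron_vec u (R_state \<theta>))"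
  shows "stabilizer_decomp (n + 3) (2 * k)
    (kron_vec u (kron_vec (R_state \<theta>) (kron_vec (R_state \<theta>) (R_state \<theta>))))"
proof -
  define v where "v = kron_vec (R_state \<theta>) (unit_vec 4 0)"
  have "stabilizer_decomp (n + 1 + 2) (k * 1) (kron_vec (kron_vec u (R_state \<theta>)) (unit_vec (2 ^ 2) 0))"
    by (intro stabilizer_decomp_kron decomp stabilizer_decomp_stabilizer_state unit_vec_stabilizer_state)
  moreover have "kron_vec (kron_vec u (R_state \<theta>)) (unit_vec (2 ^ 2) 0) = kron_vec u v"
    by (simp add: v_def kron_vec_assoc)
  moreover have "n + 1 + 2 = n + (3::nat)"
    by simp
  ultimately have decomp_v: "stabilizer_decomp (n + 3) k (kron_vec u v)"
    by (metis mult_1_right)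
  have decomp_U: "stabilizer_decomp (n + 3) k (kron_vec u (U *\<^sub>v v))" if U: "U \<in> clifford 3" for U
  proof -
    have "kron_mat (1\<^sub>m (2 ^ n)) U *\<^sub>v kron_vec u v = kron_vec (1\<^sub>m (2 ^ n) *\<^sub>v u) (U *\<^sub>v v)"
      using u by (intro kron_mat_mult_vec[OF one_carrier_mat clifford_carrier[OF U]]) (simp_all add: v_def)
    also have "1\<^sub>m (2 ^ n) *\<^sub>v u = u"
      using u by (intro one_mult_mat_vec carrier_vecI)
    finally have "kron_mat (1\<^sub>m (2 ^ n)) U *\<^sub>v kron_vec u v = kron_vec u (U *\<^sub>v v)" .
    with stabilizer_decomp_clifford[OF clifford_kron[OF clifford_one U] decomp_v] show ?thesis
      by simp
  qed
  have "stabilizer_decomp (n + 3) (k + k)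
      (((1 - cis \<theta> ^ 2) / 2) \<cdot>\<^sub>v kron_vec u (cat_clifford *\<^sub>v v) +
        cis \<theta> \<cdot>\<^sub>v kron_vec u (hadamard_cat_clifford *\<^sub>v v))"
    by (intro stabilizer_decomp_lincomb decomp_U cat_clifford_clifford hadamard_cat_clifford_clifford)
  moreover have "((1 - cis \<theta> ^ 2) / 2) \<cdot>\<^sub>v kron_vec u (cat_clifford *\<^sub>v v) +
        cis \<theta> \<cdot>\<^sub>v kron_vec u (hadamard_cat_clifford *\<^sub>v v) =
      kron_vec u (kron_vec (R_state \<theta>) (kron_vec (R_state \<theta>) (R_state \<theta>)))"
    unfolding R_state_cube v_def
    using clifford_carrier[OF cat_clifford_clifford] clifford_carrier[OF hadamard_cat_clifford_clifford]
    by (intro kron_vec_lincomb_right[symmetric]) simp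
  ultimately show ?thesis
    by (simp add: mult_2)
qed

lemma stabilizer_decomp_tensor_pow_R_state:
  "stabilizer_decomp (Suc n) (2 ^ (Suc n div 2 + 1)) (tensor_pow (R_state \<theta>) (Suc n))"
proof (induction n rule: nat_induct2)
  have "stabilizer_decomp (0 + 1) (1 * 2) (kron_vec (tensor_pow (R_state \<theta>) 0) (R_state \<theta>))"
    unfolding tensor_pow_0
    by (intro stabilizer_decomp_kron stabilizer_decomp_R_state stabilizer_decomp_stabilizer_state
        unit_vec_stabilizer_state)
  then have one: "stabilizer_decomp 1 2 (tensor_pow (R_state \<theta>) 1)"
    by simp
  then show "stabilizer_decomp (Suc 0) (2 ^ (Suc 0 div 2 + 1)) (tensor_pow (R_state \<theta>) (Suc 0))"
    by simp
  have "stabilizer_decomp (1 + 1) (2 * 2) (kron_vec (tensor_pow (R_state \<theta>) 1) (R_state \<theta>))"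
    by (intro stabilizer_decomp_kron one stabilizer_decomp_R_state)
  then show "stabilizer_decomp (Suc 1) (2 ^ (Suc 1 div 2 + 1)) (tensor_pow (R_state \<theta>) (Suc 1))"
    by simp
next
  case (step n)
  have "stabilizer_decomp (n + 3) (2 * 2 ^ (Suc n div 2 + 1))
      (kron_vec (tensor_pow (R_state \<theta>) n) (kron_vec (R_state \<theta>) (kron_vec (R_state \<theta>) (R_state \<theta>))))"
    using step by (intro stabilizer_decomp_kron_R_state_cube) simp_all
  then show ?case
    by (simp add: kron_vec_assoc numeral_3_eq_3)
qed

lemma stabilizer_rank_tensor_pow_R_state:
  "stabilizer_rank m (tensor_pow (R_state \<theta>) m) \<le> 2 ^ (m div 2 + 1)"
proof (cases m)
  case 0
  have "stabilizer_rank 0 (tensor_pow (R_state \<theta>) 0) \<le> 1"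
    unfolding tensor_pow_0
    by (intro stabilizer_rank_le stabilizer_decomp_stabilizer_state unit_vec_stabilizer_state)
  then show ?thesis
    using 0 by simp
next
  case (Suc n)
  then show ?thesis
    using stabilizer_rank_le[OF stabilizer_decomp_tensor_pow_R_state] by simp
qed

theorem theorem2:
  fixes \<theta> :: real
  shows "(\<lambda>m. real (stabilizer_rank m (tensor_pow (R_state \<theta>) m))) \<in> O(\<lambda>m. 2 powr (real m / 2))"
proof (rule bigoI[where c = 2], rule always_eventually, rule allI)
  fix m :: nat
  have "real (stabilizer_rank m (tensor_pow (R_state \<theta>) m)) \<le> real (2 ^ (m div 2 + 1))"
    using stabilizer_rank_tensor_pow_R_state by (simp only: of_nat_le_iff)
  also have "\<dots> = 2 * 2 powr real (m div 2)"
    by (simp add: powr_realpow)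
  also have "\<dots> \<le> 2 * 2 powr (real m / 2)"
  proof -
    have "real (m div 2) \<le> real m / 2"
      by linarith
    then show ?thesis
      by simp
  qed
  finally show "norm (real (stabilizer_rank m (tensor_pow (R_state \<theta>) m))) \<le> 2 * norm (2 powr (real m / 2))"
    by simp
qed

end
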